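(* Consider the linear regression model $y_i=x_i^t\beta+\sigma\varepsilon_i$, $i=1,\dots,n$, with fixed covariates $x_i\in\mathbb{R}^p$, $\varepsilon_i$ i.i.d. with density $$f_{\rm EH}(\varepsilon)=(1-s)\,\phi(\varepsilon;0,1)+s\int_0^\infty \phi(\varepsilon;0,u)\,H(u;\gamma)\,du,\qquad H(u;\gamma)=\frac{\gamma}{1+u}\{1+\log(1+u)\}^{-1-\gamma},$$ $s\in(0,1)$, $\gamma>0$ fixed. Let $\sigma^2$ have an inverse-gamma prior and, conditionally on $\sigma$, let $\beta_1,\dots,\beta_p$ be independent with $\beta_k\mid\sigma\sim\frac1\sigma\pi_\beta(\beta_k/\sigma)$, where $\pi_\beta$ is a horseshoe density $\pi_\beta(t)=\int_0^\infty\phi(t;0,\tau^2\lambda^2)\frac{2}{\pi(1+\lambda^2)}\,d\lambda$ for a fixed $\tau>0$. If $n\ge 2$, then $E[|\beta_k|^2\mid y]<\infty$ for each $k=1,\dots,p$.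
   Context: $\phi(\cdot;0,v)$ is the $N(0,v)$ density; $y=(y_1,\dots,y_n)$ is the observed data and $E[\cdot\mid y]$ the posterior expectation. *)

theory Defs
  imports "HOL-Analysis.Analysis"
begin

definition phi :: "real \<Rightarrow> real \<Rightarrow> real" where
  "phi v x = exp (- (x ^ 2) / (2 * v)) / sqrt (2 * pi * v)"

definition H_EH :: "real \<Rightarrow> real \<Rightarrow> real" where
  "H_EH \<gamma> u = \<gamma> / (1 + u) * (1 + ln (1 + u)) powr (- 1 - \<gamma>)"

definition f_EH :: "real \<Rightarrow> real \<Rightarrow> real \<Rightarrow> ennreal" where
  "f_EH s \<gamma> e = ennreal ((1 - s) * phi 1 e)
      + ennreal s * (\<integral>\<^sup>+ u \<in> {0<..}. ennreal (phi u e * H_EH \<gamma> u) \<partial>lborel)"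

definition horseshoe :: "real \<Rightarrow> real \<Rightarrow> ennreal" where
  "horseshoe \<tau> t = (\<integral>\<^sup>+ l \<in> {0<..}. ennreal (phi (\<tau>\<^sup>2 * l\<^sup>2) t * (2 / (pi * (1 + l\<^sup>2)))) \<partial>lborel)"

definition invgamma_density :: "real \<Rightarrow> real \<Rightarrow> real \<Rightarrow> real" where
  "invgamma_density a b v = b powr a / Gamma a * v powr (- a - 1) * exp (- b / v)"

text \<open>Joint density of (beta, sigma^2, y): prior times likelihood, v = sigma^2 > 0.\<close>
definition joint_density ::
  "real \<Rightarrow> real \<Rightarrow> real \<Rightarrow> real \<Rightarrow> real \<Rightarrow> ('n::finite \<Rightarrow> real^'p::finite) \<Rightarrow> real^'n
     \<Rightarrow> real^'p \<Rightarrow> real \<Rightarrow> ennreal" where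
  "joint_density s \<gamma> \<tau> a b x y \<beta> v =
     ennreal (invgamma_density a b v)
     * (\<Prod>j\<in>UNIV. ennreal (1 / sqrt v) * horseshoe \<tau> (\<beta> $ j / sqrt v))
     * (\<Prod>i\<in>UNIV. ennreal (1 / sqrt v) * f_EH s \<gamma> ((y $ i - x i \<bullet> \<beta>) / sqrt v))"

text \<open>Posterior expectation E[g(beta, sigma^2) | y] for nonnegative g.\<close>
definition posterior_expectation ::
  "real \<Rightarrow> real \<Rightarrow> real \<Rightarrow> real \<Rightarrow> real \<Rightarrow> ('n::finite \<Rightarrow> real^'p::finite) \<Rightarrow> real^'n
     \<Rightarrow> (real^'p \<Rightarrow> real \<Rightarrow> real) \<Rightarrow> ennreal" where
  "posterior_expectation s \<gamma> \<tau> a b x y g =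
     (\<integral>\<^sup>+ v \<in> {0<..}. (\<integral>\<^sup>+ \<beta>. ennreal (g \<beta> v) * joint_density s \<gamma> \<tau> a b x y \<beta> v \<partial>lborel) \<partial>lborel)
     / (\<integral>\<^sup>+ v \<in> {0<..}. (\<integral>\<^sup>+ \<beta>. joint_density s \<gamma> \<tau> a b x y \<beta> v \<partial>lborel) \<partial>lborel)"

end

theory Submission
  imports Defs "HOL-Probability.Distributions" "HOL-Real_Asymp.Real_Asymp"
begin

(* Write v = sigma^2 and r = sqrt v. For fixed v the joint density is the inverse-gamma
   density times p scaled horseshoe factors (1/r) pi_beta(beta_j / r) and n scaled error
   factors (1/r) f_EH(e_i / r). Two tail facts drive the bound: f_EH is bounded, and
   t^2 pi_beta(t) is bounded, because bounding 1/(1 + lambda^2) by 1/lambda^2 turns the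
   horseshoe mixture into the explicit integral of exp(-t^2/(2 tau^2 lambda^2)) / lambda^3,
   which is proportional to 1/t^2.
   Let C and F be these bounds and pick i0 with x_{i0,k} <> 0. Bounding |beta_k|^2 times the
   horseshoe factor of beta_k by r C and every error factor except that of i0 by F/r, the
   error factor of i0 integrates
   out beta_k (a linear change of variables with Jacobian 1/|x_{i0,k}|) and the remaining
   horseshoe factors integrate to one. The inner integral is thus at most a constant times
   the inverse-gamma density times v^(-(n-2)/2), which for n >= 2 is integrable: the tail
   is v^(-a-1), and exp(-b/v) beats every power of v near 0. The normalising constant is
   positive because the joint density is. *)

lemma measurable_phi [measurable (raw)]:
  assumes [measurable]: "f \<in> borel_measurable M" "g \<in> borel_measurable M"
  shows "(\<lambda>x. phi (f x) (g x)) \<in> borel_measurable M"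
  unfolding phi_def by measurable

lemma measurable_H_EH [measurable (raw)]:
  assumes [measurable]: "f \<in> borel_measurable M"
  shows "(\<lambda>x. H_EH \<gamma> (f x)) \<in> borel_measurable M"
  unfolding H_EH_def by measurable

lemma borel_measurable_horseshoe [measurable]: "horseshoe \<tau> \<in> borel_measurable borel"
  unfolding horseshoe_def by measurable

lemma borel_measurable_f_EH [measurable]: "f_EH s \<gamma> \<in> borel_measurable borel"
  unfolding f_EH_def by measurable

lemma borel_measurable_invgamma_density [measurable]: "invgamma_density a b \<in> borel_measurable borel"
  unfolding invgamma_density_def by measurable

lemma measurable_vec_nth [measurable (raw)]:
  assumes [measurable]: "f \<in> M \<rightarrow>\<^sub>M (borel :: (real^'n::finite) measure)"
  shows "(\<lambda>x. f x $ i) \<in> borel_measurable M"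
  using measurable_comp[OF assms, of "\<lambda>v. v $ i" borel] by (simp add: comp_def)

lemma borel_measurable_nn_integral_joint_density:
  "(\<lambda>v. \<integral>\<^sup>+\<beta>. joint_density s \<gamma> \<tau> a b x y (\<beta> :: real^'p::finite) v \<partial>lborel) \<in> borel_measurable borel"
proof -
  have sets_eq: "sets (lborel \<Otimes>\<^sub>M lborel) = sets (borel \<Otimes>\<^sub>M (borel :: (real^'p) measure))"
    by (intro sets_pair_measure_cong) auto
  have "(\<lambda>(v, \<beta>). joint_density s \<gamma> \<tau> a b x y \<beta> v)
      \<in> borel_measurable (borel \<Otimes>\<^sub>M (borel :: (real^'p) measure))"
    unfolding joint_density_def by measurable
  then have [measurable]: "(\<lambda>(v, \<beta>). joint_density s \<gamma> \<tau> a b x y \<beta> v)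
      \<in> borel_measurable (lborel \<Otimes>\<^sub>M (lborel :: (real^'p) measure))"
    by (subst measurable_cong_sets[OF sets_eq refl])
  show ?thesis by measurable
qed

lemma phi_eq_normal_density: "0 < v \<Longrightarrow> phi v x = normal_density 0 (sqrt v) x"
  unfolding phi_def normal_density_def by (simp add: field_simps)

lemma phi_nonneg: "0 \<le> v \<Longrightarrow> 0 \<le> phi v x"
  unfolding phi_def by simp

lemma phi_le: "0 < v \<Longrightarrow> phi v x \<le> 1 / (sqrt (2 * pi) * sqrt v)"
  unfolding phi_def by (simp add: divide_simps real_sqrt_mult)

lemma nn_integral_phi: "0 < v \<Longrightarrow> (\<integral>\<^sup>+x. ennreal (phi v x) \<partial>lborel) = 1"
  by (simp add: phi_eq_normal_density nn_integral_eq_integral)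

lemma nn_integral_Ioi_FTC:
  fixes f F :: "real \<Rightarrow> real"
  assumes "\<And>x. c < x \<Longrightarrow> DERIV F x :> f x" and "\<And>x. c < x \<Longrightarrow> isCont f x"
    and "\<And>x. c < x \<Longrightarrow> 0 \<le> f x"
    and "(F \<longlongrightarrow> A) (at_right c)" and "(F \<longlongrightarrow> B) at_top"
  shows "(\<integral>\<^sup>+x\<in>{c<..}. ennreal (f x) \<partial>lborel) = ennreal (B - A)"
proof -
  have Ioi: "einterval (ereal c) \<infinity> = {c<..}"
    by (auto simp: einterval_def)
  have "set_integrable lborel (einterval c \<infinity>) f \<and> (LBINT x=ereal c..\<infinity>. f x) = B - A"
    by (intro conjI interval_integral_FTC_nonneg[where F = F]) (use assms in \<open>auto simp: ereal_tendsto_simps\<close>)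
  then have "integrable lborel (\<lambda>x. indicator {c<..} x * f x)"
    and "(\<integral>x. indicator {c<..} x * f x \<partial>lborel) = B - A"
    unfolding Ioi by (simp_all add: set_integrable_def interval_lebesgue_integral_def set_lebesgue_integral_def)
  moreover have "(\<integral>\<^sup>+x\<in>{c<..}. ennreal (f x) \<partial>lborel)
      = (\<integral>\<^sup>+x. ennreal (indicator {c<..} x * f x) \<partial>lborel)"
    by (intro nn_integral_cong) (simp add: indicator_def)
  ultimately show ?thesis
    using assms(3) by (simp add: nn_integral_eq_integral indicator_def)
qed

lemma nn_integral_real_affine_inverse:
  fixes q :: "real \<Rightarrow> ennreal"
  assumes [measurable]: "q \<in> borel_measurable borel" and "c \<noteq> 0"
  shows "(\<integral>\<^sup>+x. q (t + c * x) \<partial>lborel) = ennreal (1 / \<bar>c\<bar>) * (\<integral>\<^sup>+x. q x \<partial>lborel)"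
proof -
  have "ennreal (1 / \<bar>c\<bar>) * (\<integral>\<^sup>+x. q x \<partial>lborel)
      = (ennreal (1 / \<bar>c\<bar>) * ennreal \<bar>c\<bar>) * (\<integral>\<^sup>+x. q (t + c * x) \<partial>lborel)"
    using nn_integral_real_affine[of q c t] assms by (simp add: mult.assoc)
  also have "ennreal (1 / \<bar>c\<bar>) * ennreal \<bar>c\<bar> = 1"
    using assms by (simp add: ennreal_mult''[symmetric])
  finally show ?thesis by simp
qed

lemma nn_integral_set_pos:
  assumes [measurable]: "f \<in> borel_measurable M" "S \<in> sets M"
    and "emeasure M S \<noteq> 0" and "\<And>x. x \<in> S \<Longrightarrow> 0 < f x"
  shows "0 < (\<integral>\<^sup>+x\<in>S. f x \<partial>M)"
proof -
  have "f x \<noteq> 0" if "x \<in> S" for x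
    using assms(4)[OF that] by (metis order_less_irrefl)
  then have "{x \<in> space M. f x * indicator S x \<noteq> 0} = S"
    using sets.sets_into_space[OF assms(2)] by (auto simp: indicator_def)
  then show ?thesis
    using assms(3) by (simp add: zero_less_iff_neq_zero nn_integral_0_iff)
qed

(* The density of r X when X has density f; in the model r = sigma. *)
definition scale_density :: "real \<Rightarrow> (real \<Rightarrow> ennreal) \<Rightarrow> real \<Rightarrow> ennreal" where
  "scale_density r f t = ennreal (1 / r) * f (t / r)"

lemma borel_measurable_scale_density [measurable]:
  assumes [measurable]: "f \<in> borel_measurable borel"
  shows "scale_density r f \<in> borel_measurable borel"
  unfolding scale_density_def by measurable

lemma nn_integral_scale_density:
  assumes [measurable]: "f \<in> borel_measurable borel" and "0 < r"
  shows "(\<integral>\<^sup>+t. scale_density r f t \<partial>lborel) = (\<integral>\<^sup>+t. f t \<partial>lborel)"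
proof -
  have "(\<integral>\<^sup>+t. scale_density r f t \<partial>lborel) = ennreal r * (\<integral>\<^sup>+t. scale_density r f (0 + r * t) \<partial>lborel)"
    using nn_integral_real_affine[of "scale_density r f" r 0] assms by simp
  also have "(\<lambda>t. scale_density r f (0 + r * t)) = (\<lambda>t. ennreal (1 / r) * f t)"
    using assms(2) by (simp add: scale_density_def)
  also have "ennreal r * (\<integral>\<^sup>+t. ennreal (1 / r) * f t \<partial>lborel) = (\<integral>\<^sup>+t. f t \<partial>lborel)"
    using assms(2) by (simp add: nn_integral_cmult ennreal_mult[symmetric] mult.assoc[symmetric])
  finally show ?thesis .
qed

lemma scale_density_le:
  assumes "0 < r" and "0 \<le> F" and "f (t / r) \<le> ennreal F"
  shows "scale_density r f t \<le> ennreal (F / r)"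
proof -
  have "scale_density r f t \<le> ennreal (1 / r) * ennreal F"
    unfolding scale_density_def using assms(3) by (rule mult_left_mono) simp
  also have "\<dots> = ennreal (F / r)"
    using assms(1,2) by (simp add: ennreal_mult[symmetric])
  finally show ?thesis .
qed

lemma sq_mult_scale_density_le:
  assumes "0 < r" and "0 \<le> C" and "ennreal ((t / r)\<^sup>2) * f (t / r) \<le> ennreal C"
  shows "ennreal (\<bar>t\<bar>\<^sup>2) * scale_density r f t \<le> ennreal (r * C)"
proof -
  have "\<bar>t\<bar>\<^sup>2 * (1 / r) = r * (t / r)\<^sup>2"
    using assms(1) by (simp add: power2_eq_square)
  then have "ennreal (\<bar>t\<bar>\<^sup>2) * scale_density r f t = ennreal r * (ennreal ((t / r)\<^sup>2) * f (t / r))"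
    using assms(1) unfolding scale_density_def by (simp add: ennreal_mult[symmetric] mult.assoc[symmetric])
  also have "\<dots> \<le> ennreal r * ennreal C"
    using assms(3) by (rule mult_left_mono) simp
  also have "\<dots> = ennreal (r * C)"
    using assms(1,2) by (simp add: ennreal_mult)
  finally show ?thesis .
qed

lemma nn_integral_lborel_split_coordinate:
  fixes G :: "'a::euclidean_space \<Rightarrow> ennreal"
  assumes [measurable]: "G \<in> borel_measurable borel" and "b \<in> Basis"
  shows "(\<integral>\<^sup>+x. G x \<partial>lborel)
    = (\<integral>\<^sup>+f. \<integral>\<^sup>+z. G (\<Sum>c\<in>Basis. (f(b := z)) c *\<^sub>R c) \<partial>lborel \<partial>(\<Pi>\<^sub>M c\<in>Basis - {b}. lborel))"
proof -
  interpret product_sigma_finite "\<lambda>_::'a. lborel :: real measure" ..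
  have [measurable]: "(\<lambda>f. \<Sum>c\<in>Basis. f c *\<^sub>R c) \<in> (\<Pi>\<^sub>M c\<in>Basis. lborel) \<rightarrow>\<^sub>M (borel :: 'a measure)"
    by measurable
  have "(\<integral>\<^sup>+x. G x \<partial>lborel) = (\<integral>\<^sup>+f. G (\<Sum>c\<in>Basis. f c *\<^sub>R c) \<partial>(\<Pi>\<^sub>M c\<in>Basis. lborel))"
    by (subst lborel_eq) (simp add: nn_integral_distr)
  also have "\<dots> = (\<integral>\<^sup>+f. \<integral>\<^sup>+z. G (\<Sum>c\<in>Basis. (f(b := z)) c *\<^sub>R c) \<partial>lborel \<partial>(\<Pi>\<^sub>M c\<in>Basis - {b}. lborel))"
    using product_nn_integral_insert[of "Basis - {b}" b "\<lambda>f. G (\<Sum>c\<in>Basis. f c *\<^sub>R c)"] assms(2)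
    by (simp add: insert_absorb)
  finally show ?thesis .
qed

lemma nn_integral_linear_form_times_prod:
  fixes w :: "'a::euclidean_space" and q g :: "real \<Rightarrow> ennreal"
  assumes [measurable]: "q \<in> borel_measurable borel" "g \<in> borel_measurable borel"
    and b: "b \<in> Basis" and wb: "w \<bullet> b \<noteq> 0"
  shows "(\<integral>\<^sup>+x. q (t - w \<bullet> x) * (\<Prod>c\<in>Basis - {b}. g (x \<bullet> c)) \<partial>lborel)
    = ennreal (1 / \<bar>w \<bullet> b\<bar>) * (\<integral>\<^sup>+s. q s \<partial>lborel) * (\<integral>\<^sup>+s. g s \<partial>lborel) ^ (DIM('a) - 1)"
proof -
  interpret product_sigma_finite "\<lambda>_::'a. lborel :: real measure" ..
  define \<Phi> :: "('a \<Rightarrow> real) \<Rightarrow> 'a" where "\<Phi> f = (\<Sum>c\<in>Basis. f c *\<^sub>R c)" for f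
  have \<Phi>_coord: "\<Phi> f \<bullet> c = f c" if "c \<in> Basis" for f c
    using that by (simp add: \<Phi>_def inner_sum_left inner_Basis if_distrib sum.delta cong: if_cong)
  have \<Phi>_inner: "w \<bullet> \<Phi> (f(b := z)) = z * (w \<bullet> b) + (\<Sum>c\<in>Basis - {b}. f c * (w \<bullet> c))" for f z
  proof -
    have "w \<bullet> \<Phi> (f(b := z)) = (\<Sum>c\<in>Basis. (f(b := z)) c * (w \<bullet> c))"
      by (simp add: \<Phi>_def inner_sum_right)
    also have "\<dots> = z * (w \<bullet> b) + (\<Sum>c\<in>Basis - {b}. f c * (w \<bullet> c))"
      using b by (simp add: sum.remove cong: sum.cong_simp)
    finally show ?thesis .
  qed
  have "(\<integral>\<^sup>+z. q (t - w \<bullet> \<Phi> (f(b := z))) * (\<Prod>c\<in>Basis - {b}. g (\<Phi> (f(b := z)) \<bullet> c)) \<partial>lborel)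
      = ennreal (1 / \<bar>w \<bullet> b\<bar>) * (\<integral>\<^sup>+s. q s \<partial>lborel) * (\<Prod>c\<in>Basis - {b}. g (f c))" for f
  proof -
    define T where "T = t - (\<Sum>c\<in>Basis - {b}. f c * (w \<bullet> c))"
    have "q (t - w \<bullet> \<Phi> (f(b := z))) * (\<Prod>c\<in>Basis - {b}. g (\<Phi> (f(b := z)) \<bullet> c))
        = q (T + (- (w \<bullet> b)) * z) * (\<Prod>c\<in>Basis - {b}. g (f c))" for z
      by (simp add: \<Phi>_inner T_def \<Phi>_coord algebra_simps cong: prod.cong_simp)
    then have "(\<integral>\<^sup>+z. q (t - w \<bullet> \<Phi> (f(b := z))) * (\<Prod>c\<in>Basis - {b}. g (\<Phi> (f(b := z)) \<bullet> c)) \<partial>lborel)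
        = (\<integral>\<^sup>+z. q (T + (- (w \<bullet> b)) * z) \<partial>lborel) * (\<Prod>c\<in>Basis - {b}. g (f c))"
      by (simp add: nn_integral_multc)
    also have "\<dots> = ennreal (1 / \<bar>w \<bullet> b\<bar>) * (\<integral>\<^sup>+s. q s \<partial>lborel) * (\<Prod>c\<in>Basis - {b}. g (f c))"
      using nn_integral_real_affine_inverse[of q "- (w \<bullet> b)" T] wb by simp
    finally show ?thesis .
  qed
  then have "(\<integral>\<^sup>+x. q (t - w \<bullet> x) * (\<Prod>c\<in>Basis - {b}. g (x \<bullet> c)) \<partial>lborel)
      = ennreal (1 / \<bar>w \<bullet> b\<bar>) * (\<integral>\<^sup>+s. q s \<partial>lborel)
        * (\<integral>\<^sup>+f. (\<Prod>c\<in>Basis - {b}. g (f c)) \<partial>(\<Pi>\<^sub>M c\<in>Basis - {b}. lborel))"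
    using b by (simp add: nn_integral_lborel_split_coordinate[where b = b] \<Phi>_def nn_integral_cmult)
  also have "(\<integral>\<^sup>+f. (\<Prod>c\<in>Basis - {b}. g (f c)) \<partial>(\<Pi>\<^sub>M c\<in>Basis - {b}. lborel)) = (\<integral>\<^sup>+s. g s \<partial>lborel) ^ (DIM('a) - 1)"
    using b by (subst product_nn_integral_prod) (auto simp: card_Diff_singleton)
  finally show ?thesis .
qed

lemma nn_integral_linear_form_times_prod_vec:
  fixes w :: "real^'p::finite" and q g :: "real \<Rightarrow> ennreal"
  assumes [measurable]: "q \<in> borel_measurable borel" "g \<in> borel_measurable borel"
    and "w $ k \<noteq> 0"
  shows "(\<integral>\<^sup>+\<beta>. q (t - w \<bullet> \<beta>) * (\<Prod>j\<in>UNIV - {k}. g (\<beta> $ j)) \<partial>lborel)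
    = ennreal (1 / \<bar>w $ k\<bar>) * (\<integral>\<^sup>+s. q s \<partial>lborel) * (\<integral>\<^sup>+s. g s \<partial>lborel) ^ (CARD('p) - 1)"
proof -
  have "Basis - {axis k 1} = (\<lambda>j. axis j (1::real)) ` (UNIV - {k})"
    by (auto simp: Basis_vec_def axis_eq_axis)
  then have "(\<Prod>c\<in>Basis - {axis k 1}. g (\<beta> \<bullet> c)) = (\<Prod>j\<in>UNIV - {k}. g (\<beta> $ j))" for \<beta> :: "real^'p"
    by (simp add: prod.reindex inj_on_def axis_eq_axis inner_axis)
  then show ?thesis
    using nn_integral_linear_form_times_prod[of q g "axis k 1" w t] assms by (simp add: inner_axis)
qed

lemma prod_mono_ennreal:
  fixes f g :: "'i \<Rightarrow> ennreal"
  shows "(\<And>i. i \<in> A \<Longrightarrow> f i \<le> g i) \<Longrightarrow> prod f A \<le> prod g A"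
  by (induction A rule: infinite_finite_induct) (auto intro!: mult_mono)

lemma sq_prior_times_likelihood_le:
  fixes x :: "'n::finite \<Rightarrow> real^'p::finite" and y :: "real^'n" and \<pi> f :: "real \<Rightarrow> ennreal"
  assumes "0 < r" "0 \<le> C" "0 \<le> F"
    and "\<And>t. ennreal (t\<^sup>2) * \<pi> t \<le> ennreal C" and "\<And>e. f e \<le> ennreal F"
  shows "ennreal (\<bar>\<beta> $ k\<bar>\<^sup>2) * (\<Prod>j\<in>UNIV. scale_density r \<pi> (\<beta> $ j))
      * (\<Prod>i\<in>UNIV. scale_density r f (y $ i - x i \<bullet> \<beta>))
    \<le> ennreal (r * C * (F / r) ^ (CARD('n) - 1))
      * (scale_density r f (y $ i0 - x i0 \<bullet> \<beta>) * (\<Prod>j\<in>UNIV - {k}. scale_density r \<pi> (\<beta> $ j)))"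
proof -
  have prior: "ennreal (\<bar>\<beta> $ k\<bar>\<^sup>2) * scale_density r \<pi> (\<beta> $ k) \<le> ennreal (r * C)"
    using assms by (intro sq_mult_scale_density_le) auto
  have "(\<Prod>i\<in>UNIV - {i0}. scale_density r f (y $ i - x i \<bullet> \<beta>)) \<le> (\<Prod>i\<in>UNIV - {i0}. ennreal (F / r))"
    using assms by (intro prod_mono_ennreal scale_density_le) auto
  also have "\<dots> = ennreal ((F / r) ^ (CARD('n) - 1))"
    using assms by (simp add: card_Diff_singleton ennreal_power)
  finally have likelihood: "(\<Prod>i\<in>UNIV - {i0}. scale_density r f (y $ i - x i \<bullet> \<beta>)) \<le> \<dots>" .
  have "ennreal (\<bar>\<beta> $ k\<bar>\<^sup>2) * (\<Prod>j\<in>UNIV. scale_density r \<pi> (\<beta> $ j))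
      * (\<Prod>i\<in>UNIV. scale_density r f (y $ i - x i \<bullet> \<beta>))
    = (ennreal (\<bar>\<beta> $ k\<bar>\<^sup>2) * scale_density r \<pi> (\<beta> $ k))
      * (\<Prod>i\<in>UNIV - {i0}. scale_density r f (y $ i - x i \<bullet> \<beta>))
      * (scale_density r f (y $ i0 - x i0 \<bullet> \<beta>) * (\<Prod>j\<in>UNIV - {k}. scale_density r \<pi> (\<beta> $ j)))"
    by (simp add: prod.remove[of UNIV k] prod.remove[of UNIV i0] ac_simps)
  also have "\<dots> \<le> ennreal (r * C) * ennreal ((F / r) ^ (CARD('n) - 1))
      * (scale_density r f (y $ i0 - x i0 \<bullet> \<beta>) * (\<Prod>j\<in>UNIV - {k}. scale_density r \<pi> (\<beta> $ j)))"
    by (intro mult_right_mono mult_mono prior likelihood) auto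
  finally show ?thesis
    using assms by (simp add: ennreal_mult)
qed

lemma nn_integral_sq_prior_times_likelihood_le:
  fixes x :: "'n::finite \<Rightarrow> real^'p::finite" and y :: "real^'n" and \<pi> f :: "real \<Rightarrow> ennreal"
  assumes [measurable]: "\<pi> \<in> borel_measurable borel" "f \<in> borel_measurable borel"
    and "(\<integral>\<^sup>+t. \<pi> t \<partial>lborel) = 1" "(\<integral>\<^sup>+e. f e \<partial>lborel) = 1"
    and "0 < r" "0 \<le> C" "0 \<le> F"
    and "\<And>t. ennreal (t\<^sup>2) * \<pi> t \<le> ennreal C" and "\<And>e. f e \<le> ennreal F"
    and "x i0 $ k \<noteq> 0" and "2 \<le> CARD('n)"
  shows "(\<integral>\<^sup>+\<beta>. ennreal (\<bar>\<beta> $ k\<bar>\<^sup>2) * (\<Prod>j\<in>UNIV. scale_density r \<pi> (\<beta> $ j))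
      * (\<Prod>i\<in>UNIV. scale_density r f (y $ i - x i \<bullet> \<beta>)) \<partial>lborel)
    \<le> ennreal (C * F ^ (CARD('n) - 1) / \<bar>x i0 $ k\<bar> * (1 / r) ^ (CARD('n) - 2))"
proof -
  let ?M = "r * C * (F / r) ^ (CARD('n) - 1)"
  have "(\<integral>\<^sup>+\<beta>. ennreal (\<bar>\<beta> $ k\<bar>\<^sup>2) * (\<Prod>j\<in>UNIV. scale_density r \<pi> (\<beta> $ j))
      * (\<Prod>i\<in>UNIV. scale_density r f (y $ i - x i \<bullet> \<beta>)) \<partial>lborel)
    \<le> (\<integral>\<^sup>+\<beta>. ennreal ?M * (scale_density r f (y $ i0 - x i0 \<bullet> \<beta>)
      * (\<Prod>j\<in>UNIV - {k}. scale_density r \<pi> (\<beta> $ j))) \<partial>lborel)"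
    using assms by (intro nn_integral_mono sq_prior_times_likelihood_le) auto
  also have "\<dots> = ennreal ?M * (\<integral>\<^sup>+\<beta>. scale_density r f (y $ i0 - x i0 \<bullet> \<beta>)
      * (\<Prod>j\<in>UNIV - {k}. scale_density r \<pi> (\<beta> $ j)) \<partial>lborel)"
    by (rule nn_integral_cmult) measurable
  also have "\<dots> = ennreal ?M * ennreal (1 / \<bar>x i0 $ k\<bar>)"
    using assms by (simp add: nn_integral_linear_form_times_prod_vec nn_integral_scale_density)
  also have "\<dots> = ennreal (C * F ^ (CARD('n) - 1) / \<bar>x i0 $ k\<bar> * (1 / r) ^ (CARD('n) - 2))"
  proof -
    have "CARD('n) - 1 = Suc (CARD('n) - 2)"
      using assms(11) by simp
    then have "?M / \<bar>x i0 $ k\<bar> = C * F ^ (CARD('n) - 1) / \<bar>x i0 $ k\<bar> * (1 / r) ^ (CARD('n) - 2)"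
      using assms(5) by (simp add: power_divide field_simps)
    then show ?thesis
      using assms(5-7) by (simp add: ennreal_mult[symmetric] divide_inverse)
  qed
  finally show ?thesis .
qed

lemma nn_integral_normal_scale_mixture:
  fixes V m :: "real \<Rightarrow> real"
  assumes [measurable]: "V \<in> borel_measurable borel" "m \<in> borel_measurable borel"
    and "\<And>l. 0 < l \<Longrightarrow> 0 < V l" and "\<And>l. 0 < l \<Longrightarrow> 0 \<le> m l"
  shows "(\<integral>\<^sup>+t. (\<integral>\<^sup>+l\<in>{0<..}. ennreal (phi (V l) t * m l) \<partial>lborel) \<partial>lborel)
    = (\<integral>\<^sup>+l\<in>{0<..}. ennreal (m l) \<partial>lborel)"
proof -
  define F where "F t l = ennreal (phi (V l) t * m l) * indicator {0<..} l" for t l :: real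
  have [measurable]: "(\<lambda>(t, l). F t l) \<in> borel_measurable (lborel \<Otimes>\<^sub>M lborel)"
    unfolding F_def by measurable
  have inner: "(\<integral>\<^sup>+t. F t l \<partial>lborel) = ennreal (m l) * indicator {0<..} l" for l
  proof (cases "0 < l")
    case True
    then have "(\<integral>\<^sup>+t. F t l \<partial>lborel) = (\<integral>\<^sup>+t. ennreal (phi (V l) t) * ennreal (m l) \<partial>lborel)"
      using assms(3,4) by (intro nn_integral_cong) (simp add: F_def ennreal_mult phi_nonneg less_imp_le)
    also have "\<dots> = ennreal (m l)"
      using True assms(3) by (simp add: nn_integral_multc nn_integral_phi)
    finally show ?thesis
      using True by simp
  qed (simp add: F_def)
  have "(\<integral>\<^sup>+t. (\<integral>\<^sup>+l\<in>{0<..}. ennreal (phi (V l) t * m l) \<partial>lborel) \<partial>lborel) = (\<integral>\<^sup>+t. \<integral>\<^sup>+l. F t l \<partial>lborel \<partial>lborel)"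
    by (simp add: F_def)
  also have "\<dots> = (\<integral>\<^sup>+l. \<integral>\<^sup>+t. F t l \<partial>lborel \<partial>lborel)"
    using lborel_pair.Fubini'[of F] by simp
  finally show ?thesis
    by (simp add: inner)
qed

lemma nn_integral_half_cauchy: "(\<integral>\<^sup>+l\<in>{0<..}. ennreal (2 / (pi * (1 + l\<^sup>2))) \<partial>lborel) = 1"
proof -
  have "(\<integral>\<^sup>+l\<in>{0<..}. ennreal (2 / (pi * (1 + l\<^sup>2))) \<partial>lborel) = ennreal (1 - 0)"
  proof (rule nn_integral_Ioi_FTC[where F = "\<lambda>l. 2 / pi * arctan l"])
    show "DERIV (\<lambda>l. 2 / pi * arctan l) l :> 2 / (pi * (1 + l\<^sup>2))" for l
      by (auto intro!: derivative_eq_intros simp: divide_simps)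
    show "isCont (\<lambda>l. 2 / (pi * (1 + l\<^sup>2))) l" for l :: real
      using add_pos_nonneg[OF zero_less_one zero_le_power2[of l]] by (intro continuous_intros) auto
    show "0 \<le> 2 / (pi * (1 + l\<^sup>2))" for l :: real
      by (simp add: add_pos_nonneg)
    show "((\<lambda>l. 2 / pi * arctan l) \<longlongrightarrow> 0) (at_right 0)"
      by real_asymp
    show "((\<lambda>l. 2 / pi * arctan l) \<longlongrightarrow> 1) at_top"
      using tendsto_mult[OF tendsto_const[of "2 / pi"] tendsto_arctan_at_top] by simp
  qed
  then show ?thesis
    by simp
qed

lemma nn_integral_horseshoe: "0 < \<tau> \<Longrightarrow> (\<integral>\<^sup>+t. horseshoe \<tau> t \<partial>lborel) = 1"
  unfolding horseshoe_def
  by (subst nn_integral_normal_scale_mixture) (simp_all add: nn_integral_half_cauchy add_pos_nonneg)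

lemma H_EH_nonneg: "0 \<le> \<gamma> \<Longrightarrow> 0 < u \<Longrightarrow> 0 \<le> H_EH \<gamma> u"
  unfolding H_EH_def by simp

lemma nn_integral_H_EH:
  assumes "0 < \<gamma>"
  shows "(\<integral>\<^sup>+u\<in>{0<..}. ennreal (H_EH \<gamma> u) \<partial>lborel) = 1"
proof -
  have "(\<integral>\<^sup>+u\<in>{0<..}. ennreal (H_EH \<gamma> u) \<partial>lborel) = ennreal (0 - (- 1))"
  proof (rule nn_integral_Ioi_FTC[where F = "\<lambda>u. - ((1 + ln (1 + u)) powr (- \<gamma>))"])
    fix u :: real
    assume u: "0 < u"
    then have "0 < 1 + ln (1 + u)"
      by (smt (verit) ln_ge_zero)
    moreover have "H_EH \<gamma> u = \<gamma> / (1 + u) * (1 + ln (1 + u)) powr (- \<gamma> - 1)"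
      unfolding H_EH_def by (simp only: diff_minus_eq_add minus_diff_commute)
    ultimately show "DERIV (\<lambda>u. - ((1 + ln (1 + u)) powr (- \<gamma>))) u :> H_EH \<gamma> u"
      using u by (auto intro!: derivative_eq_intros simp: divide_simps)
    show "isCont (H_EH \<gamma>) u"
      using u \<open>0 < 1 + ln (1 + u)\<close> unfolding H_EH_def by (auto intro!: continuous_intros)
    show "0 \<le> H_EH \<gamma> u"
      using u assms by (simp add: H_EH_nonneg)
  next
    show "((\<lambda>u. - ((1 + ln (1 + u)) powr (- \<gamma>))) \<longlongrightarrow> - 1) (at_right 0)"
      and "((\<lambda>u. - ((1 + ln (1 + u)) powr (- \<gamma>))) \<longlongrightarrow> 0) at_top"
      using assms by real_asymp+
  qed
  then show ?thesis
    by simp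
qed

lemma nn_integral_f_EH:
  assumes "0 \<le> s" "s \<le> 1" "0 < \<gamma>"
  shows "(\<integral>\<^sup>+e. f_EH s \<gamma> e \<partial>lborel) = 1"
proof -
  have "(\<integral>\<^sup>+e. f_EH s \<gamma> e \<partial>lborel) = ennreal (1 - s) * (\<integral>\<^sup>+e. ennreal (phi 1 e) \<partial>lborel)
      + ennreal s * (\<integral>\<^sup>+e. (\<integral>\<^sup>+u\<in>{0<..}. ennreal (phi u e * H_EH \<gamma> u) \<partial>lborel) \<partial>lborel)"
    unfolding f_EH_def using assms
    by (simp add: nn_integral_add nn_integral_cmult ennreal_mult phi_nonneg)
  also have "(\<integral>\<^sup>+e. (\<integral>\<^sup>+u\<in>{0<..}. ennreal (phi u e * H_EH \<gamma> u) \<partial>lborel) \<partial>lborel) = 1"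
    using nn_integral_normal_scale_mixture[of "\<lambda>u. u" "H_EH \<gamma>"] nn_integral_H_EH assms
    by (simp add: H_EH_nonneg)
  finally show ?thesis
    using assms by (simp add: nn_integral_phi ennreal_plus[symmetric] del: ennreal_plus)
qed

lemma H_EH_le:
  assumes "0 < \<gamma>" "0 < u"
  shows "H_EH \<gamma> u \<le> \<gamma> / (1 + u)"
proof -
  have "1 \<le> 1 + ln (1 + u)"
    using assms(2) by simp
  then have "(1 + ln (1 + u)) powr (- 1 - \<gamma>) \<le> (1 + ln (1 + u)) powr 0"
    using assms(1) by (intro powr_mono) auto
  then have "(1 + ln (1 + u)) powr (- 1 - \<gamma>) \<le> 1"
    using \<open>1 \<le> 1 + ln (1 + u)\<close> by simp
  then show ?thesis
    unfolding H_EH_def using assms by (intro mult_left_le) auto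
qed

lemma nn_integral_Ioi_inverse_sqrt_mult_one_plus:
  "(\<integral>\<^sup>+u\<in>{0<..}. ennreal (1 / (sqrt u * (1 + u))) \<partial>lborel) = ennreal pi"
proof -
  have "(\<integral>\<^sup>+u\<in>{0<..}. ennreal (1 / (sqrt u * (1 + u))) \<partial>lborel) = ennreal (pi - 0)"
  proof (rule nn_integral_Ioi_FTC[where F = "\<lambda>u. 2 * arctan (sqrt u)"])
    fix u :: real
    assume "0 < u"
    then show "DERIV (\<lambda>u. 2 * arctan (sqrt u)) u :> 1 / (sqrt u * (1 + u))"
      and "isCont (\<lambda>u. 1 / (sqrt u * (1 + u))) u"
      and "0 \<le> 1 / (sqrt u * (1 + u))"
      by (auto intro!: derivative_eq_intros continuous_intros simp: divide_simps)
  next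
    show "((\<lambda>u. 2 * arctan (sqrt u)) \<longlongrightarrow> 0) (at_right 0)"
      and "((\<lambda>u. 2 * arctan (sqrt u)) \<longlongrightarrow> pi) at_top"
      by real_asymp+
  qed
  then show ?thesis
    by simp
qed

lemma f_EH_le:
  assumes "0 < s" "s < 1" "0 < \<gamma>"
  shows "f_EH s \<gamma> e \<le> ennreal ((1 - s) / sqrt (2 * pi) + s * \<gamma> * pi / sqrt (2 * pi))"
proof -
  have "phi u e * H_EH \<gamma> u \<le> \<gamma> / sqrt (2 * pi) * (1 / (sqrt u * (1 + u)))" if "0 < u" for u
  proof -
    have "phi u e * H_EH \<gamma> u \<le> 1 / (sqrt (2 * pi) * sqrt u) * (\<gamma> / (1 + u))"
      using that assms by (intro mult_mono phi_le H_EH_le) (auto simp: phi_nonneg H_EH_nonneg)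
    then show ?thesis
      by (simp add: field_simps)
  qed
  then have "(\<integral>\<^sup>+u\<in>{0<..}. ennreal (phi u e * H_EH \<gamma> u) \<partial>lborel)
      \<le> (\<integral>\<^sup>+u\<in>{0<..}. ennreal (\<gamma> / sqrt (2 * pi)) * ennreal (1 / (sqrt u * (1 + u))) \<partial>lborel)"
    using assms by (intro nn_integral_mono) (auto simp: ennreal_mult[symmetric] ennreal_leI split: split_indicator)
  also have "\<dots> = ennreal (\<gamma> * pi / sqrt (2 * pi))"
    using assms by (simp add: nn_integral_cmult mult.assoc nn_integral_Ioi_inverse_sqrt_mult_one_plus ennreal_mult[symmetric])
  finally have mixture: "(\<integral>\<^sup>+u\<in>{0<..}. ennreal (phi u e * H_EH \<gamma> u) \<partial>lborel) \<le> \<dots>" .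
  have "(1 - s) * phi 1 e \<le> (1 - s) / sqrt (2 * pi)"
    using phi_le[of 1 e] assms by (simp add: divide_simps mult_left_mono)
  then have "f_EH s \<gamma> e \<le> ennreal ((1 - s) / sqrt (2 * pi)) + ennreal s * ennreal (\<gamma> * pi / sqrt (2 * pi))"
    unfolding f_EH_def by (intro add_mono mult_left_mono mixture ennreal_leI) simp_all
  also have "\<dots> = ennreal ((1 - s) / sqrt (2 * pi) + s * \<gamma> * pi / sqrt (2 * pi))"
    using assms by (simp add: ennreal_mult[symmetric] ennreal_plus[symmetric] mult.assoc del: ennreal_plus)
  finally show ?thesis .
qed

lemma nn_integral_Ioi_exp_div_cube:
  assumes "0 < c"
  shows "(\<integral>\<^sup>+l\<in>{0<..}. ennreal (exp (- c / l\<^sup>2) / l ^ 3) \<partial>lborel) = ennreal (1 / (2 * c))"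
proof -
  have "(\<integral>\<^sup>+l\<in>{0<..}. ennreal (exp (- c / l\<^sup>2) / l ^ 3) \<partial>lborel) = ennreal (1 / (2 * c) - 0)"
  proof (rule nn_integral_Ioi_FTC[where F = "\<lambda>l. exp (- c / l\<^sup>2) / (2 * c)"])
    fix l :: real
    assume "0 < l"
    then show "DERIV (\<lambda>l. exp (- c / l\<^sup>2) / (2 * c)) l :> exp (- c / l\<^sup>2) / l ^ 3"
      and "isCont (\<lambda>l. exp (- c / l\<^sup>2) / l ^ 3) l"
      and "0 \<le> exp (- c / l\<^sup>2) / l ^ 3"
      using assms by (auto intro!: derivative_eq_intros continuous_intros
          simp: divide_simps power2_eq_square power3_eq_cube)
  next
    show "((\<lambda>l. exp (- c / l\<^sup>2) / (2 * c)) \<longlongrightarrow> 0) (at_right 0)"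
      using assms by real_asymp
    have "((\<lambda>l. - c / l\<^sup>2) \<longlongrightarrow> 0) at_top"
      by real_asymp
    then have "((\<lambda>l. exp (- c / l\<^sup>2) / (2 * c)) \<longlongrightarrow> exp 0 / (2 * c)) at_top"
      using assms by (intro tendsto_divide tendsto_exp tendsto_const) auto
    then show "((\<lambda>l. exp (- c / l\<^sup>2) / (2 * c)) \<longlongrightarrow> 1 / (2 * c)) at_top"
      by simp
  qed
  then show ?thesis
    by simp
qed

lemma sq_mult_horseshoe_le:
  assumes "0 < \<tau>"
  shows "ennreal (t\<^sup>2) * horseshoe \<tau> t \<le> ennreal (2 * \<tau> / (pi * sqrt (2 * pi)))"
proof (cases "t = 0")
  case False
  define c where "c = t\<^sup>2 / (2 * \<tau>\<^sup>2)"
  define K where "K = 2 / (pi * sqrt (2 * pi) * \<tau>)"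
  have c: "0 < c" and K: "0 < K"
    using False assms by (simp_all add: c_def K_def)
  have "phi (\<tau>\<^sup>2 * l\<^sup>2) t * (2 / (pi * (1 + l\<^sup>2))) \<le> K * (exp (- c / l\<^sup>2) / l ^ 3)" if l: "0 < l" for l
  proof -
    have "phi (\<tau>\<^sup>2 * l\<^sup>2) t = exp (- c / l\<^sup>2) / (sqrt (2 * pi) * \<tau> * l)"
      using l assms unfolding phi_def c_def by (simp add: real_sqrt_mult field_simps)
    moreover have "2 / (pi * (1 + l\<^sup>2)) \<le> 2 / (pi * l\<^sup>2)"
      using l by (intro divide_left_mono mult_left_mono) (auto intro!: mult_pos_pos add_pos_nonneg)
    ultimately have "phi (\<tau>\<^sup>2 * l\<^sup>2) t * (2 / (pi * (1 + l\<^sup>2))) \<le> exp (- c / l\<^sup>2) / (sqrt (2 * pi) * \<tau> * l) * (2 / (pi * l\<^sup>2))"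
      using l assms by (simp only:) (intro mult_left_mono; simp)
    also have "\<dots> = K * (exp (- c / l\<^sup>2) / l ^ 3)"
      unfolding K_def using l assms by (simp add: field_simps power2_eq_square power3_eq_cube)
    finally show ?thesis .
  qed
  then have "horseshoe \<tau> t \<le> (\<integral>\<^sup>+l\<in>{0<..}. ennreal K * ennreal (exp (- c / l\<^sup>2) / l ^ 3) \<partial>lborel)"
    unfolding horseshoe_def using K
    by (intro nn_integral_mono) (auto simp: ennreal_mult[symmetric] ennreal_leI split: split_indicator)
  also have "\<dots> = ennreal (K / (2 * c))"
    using nn_integral_Ioi_exp_div_cube[OF c] c K by (simp add: nn_integral_cmult mult.assoc ennreal_mult[symmetric])
  finally have "ennreal (t\<^sup>2) * horseshoe \<tau> t \<le> ennreal (t\<^sup>2) * ennreal (K / (2 * c))"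
    by (rule mult_left_mono) simp
  also have "\<dots> = ennreal (t\<^sup>2 * (K / (2 * c)))"
    using c K by (intro ennreal_mult[symmetric]) auto
  also have "t\<^sup>2 * (K / (2 * c)) = 2 * \<tau> / (pi * sqrt (2 * pi))"
    using False assms by (simp add: K_def c_def field_simps power2_eq_square)
  finally show ?thesis .
qed simp

lemma emeasure_lborel_Ioi_neq_0: "emeasure lborel {c::real<..} \<noteq> 0"
proof -
  have "emeasure lborel {c<..c + 1} \<le> emeasure lborel {c<..}"
    by (intro emeasure_mono) auto
  then show ?thesis
    by auto
qed

lemma horseshoe_pos:
  assumes "0 < \<tau>"
  shows "0 < horseshoe \<tau> t"
  unfolding horseshoe_def using assms emeasure_lborel_Ioi_neq_0
  by (intro nn_integral_set_pos) (auto simp: phi_def intro!: mult_pos_pos divide_pos_pos add_pos_nonneg)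

lemma f_EH_pos: "s < 1 \<Longrightarrow> 0 < f_EH s \<gamma> e"
  unfolding f_EH_def phi_def by (simp add: add_pos_nonneg)

lemma invgamma_density_pos: "0 < a \<Longrightarrow> 0 < b \<Longrightarrow> 0 < v \<Longrightarrow> 0 < invgamma_density a b v"
  unfolding invgamma_density_def by simp

lemma invgamma_kernel_power_bounded:
  fixes a b :: real
  assumes "0 < a" "0 < b"
  obtains C where "\<And>v. 0 < v \<Longrightarrow> v powr (- a - 1) * exp (- b / v) * (1 / sqrt v) ^ m \<le> C"
proof -
  define g where "g v = v powr (- a - 1) * exp (- b / v) * (1 / sqrt v) ^ m" for v :: real
  have "(g \<longlongrightarrow> 0) (at_right 0)"
    unfolding g_def using assms by real_asymp
  then have "eventually (\<lambda>v. g v < 1) (at_right 0)"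
    by (rule order_tendstoD) simp
  then obtain d where d: "0 < d" "\<And>v. 0 < v \<Longrightarrow> v < d \<Longrightarrow> g v < 1"
    by (auto simp: eventually_at_right_field)
  have "g v \<le> max 1 (d powr (- a - 1) * (1 / sqrt d) ^ m)" if "0 < v" for v
  proof (cases "v < d")
    case True
    then show ?thesis
      using d that by (simp add: less_imp_le le_max_iff_disj)
  next
    case False
    then have "g v \<le> d powr (- a - 1) * 1 * (1 / sqrt d) ^ m"
      unfolding g_def using d that assms
      by (intro mult_mono power_mono powr_mono2') (auto simp: divide_simps)
    then show ?thesis
      by simp
  qed
  then show ?thesis
    using that unfolding g_def by blast
qed

lemma nn_integral_Ioi_1_powr:
  assumes "0 < a"
  shows "(\<integral>\<^sup>+v\<in>{1<..}. ennreal (v powr (- a - 1)) \<partial>lborel) = ennreal (1 / a)"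
proof -
  have "(\<integral>\<^sup>+v\<in>{1<..}. ennreal (v powr (- a - 1)) \<partial>lborel) = ennreal (0 - (- inverse a))"
  proof (rule nn_integral_Ioi_FTC[where F = "\<lambda>v. - (v powr (- a)) / a"])
    fix v :: real
    assume "1 < v"
    then show "DERIV (\<lambda>v. - (v powr (- a)) / a) v :> v powr (- a - 1)"
      and "isCont (\<lambda>v. v powr (- a - 1)) v"
      and "0 \<le> v powr (- a - 1)"
      using assms by (auto intro!: derivative_eq_intros continuous_intros simp: divide_simps)
  next
    show "((\<lambda>v. - (v powr (- a)) / a) \<longlongrightarrow> - inverse a) (at_right 1)"
      using assms by real_asymp
    show "((\<lambda>v. - (v powr (- a)) / a) \<longlongrightarrow> 0) at_top"
      using assms by real_asymp
  qed
  then show ?thesis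
    by (simp add: divide_inverse)
qed

lemma nn_integral_invgamma_density_mult_power_less_top:
  assumes "0 < a" "0 < b"
  shows "(\<integral>\<^sup>+v\<in>{0<..}. ennreal (invgamma_density a b v * (1 / sqrt v) ^ m) \<partial>lborel) < \<infinity>"
proof -
  obtain C where C: "\<And>v. 0 < v \<Longrightarrow> v powr (- a - 1) * exp (- b / v) * (1 / sqrt v) ^ m \<le> C"
    using invgamma_kernel_power_bounded assms by blast
  define N where "N = b powr a / Gamma a"
  have N: "0 < N"
    unfolding N_def using assms by simp
  have density: "invgamma_density a b v * (1 / sqrt v) ^ m
      = N * (v powr (- a - 1) * exp (- b / v) * (1 / sqrt v) ^ m)" for v
    by (simp add: invgamma_density_def N_def)
  have near_zero: "invgamma_density a b v * (1 / sqrt v) ^ m \<le> N * C" if "0 < v" for v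
    unfolding density using N by (intro mult_left_mono C that) simp
  have tail: "invgamma_density a b v * (1 / sqrt v) ^ m \<le> N * v powr (- a - 1)" if "1 < v" for v
  proof -
    have "v powr (- a - 1) * exp (- b / v) * (1 / sqrt v) ^ m \<le> v powr (- a - 1) * 1 * 1"
      using that assms by (intro mult_mono power_le_one) (auto simp: divide_simps)
    then show ?thesis
      unfolding density using N by (simp add: mult_left_mono)
  qed
  have "(\<integral>\<^sup>+v\<in>{0<..}. ennreal (invgamma_density a b v * (1 / sqrt v) ^ m) \<partial>lborel)
     \<le> (\<integral>\<^sup>+v. ennreal (N * C) * indicator {0<..1} v
        + ennreal N * (ennreal (v powr (- a - 1)) * indicator {1<..} v) \<partial>lborel)"
    using near_zero tail N
    by (intro nn_integral_mono) (auto simp: ennreal_mult[symmetric] ennreal_leI split: split_indicator)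
  also have "\<dots> = ennreal (N * C) * emeasure lborel {0<..1::real} + ennreal N * ennreal (1 / a)"
    using nn_integral_Ioi_1_powr[OF assms(1)] by (simp add: nn_integral_add nn_integral_cmult)
  also have "\<dots> < \<infinity>"
    by (simp add: ennreal_mult_less_top)
  finally show ?thesis .
qed

lemma joint_density_eq_scale_density:
  "joint_density s \<gamma> \<tau> a b x y \<beta> v = ennreal (invgamma_density a b v)
    * (\<Prod>j\<in>UNIV. scale_density (sqrt v) (horseshoe \<tau>) (\<beta> $ j))
    * (\<Prod>i\<in>UNIV. scale_density (sqrt v) (f_EH s \<gamma>) (y $ i - x i \<bullet> \<beta>))"
  unfolding joint_density_def scale_density_def ..

lemma joint_density_pos:
  assumes "s < 1" "0 < \<tau>" "0 < a" "0 < b" "0 < v"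
  shows "0 < joint_density s \<gamma> \<tau> a b x y \<beta> v"
  unfolding joint_density_eq_scale_density scale_density_def
  using assms invgamma_density_pos[OF assms(3-5)] horseshoe_pos f_EH_pos
  by (simp add: zero_less_iff_neq_zero prod_zero_iff)

lemma nn_integral_joint_density_pos:
  assumes "s < 1" "0 < \<tau>" "0 < a" "0 < b"
  shows "0 < (\<integral>\<^sup>+v\<in>{0<..}. (\<integral>\<^sup>+\<beta>. joint_density s \<gamma> \<tau> a b x y (\<beta> :: real^'p::finite) v \<partial>lborel) \<partial>lborel)"
proof (rule nn_integral_set_pos)
  fix v :: real
  assume "v \<in> {0<..}"
  then have "0 < (\<integral>\<^sup>+\<beta>\<in>UNIV. joint_density s \<gamma> \<tau> a b x y (\<beta> :: real^'p) v \<partial>lborel)"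
    using assms by (intro nn_integral_set_pos joint_density_pos) (auto simp: joint_density_def)
  then show "0 < (\<integral>\<^sup>+\<beta>. joint_density s \<gamma> \<tau> a b x y (\<beta> :: real^'p) v \<partial>lborel)"
    by simp
qed (auto simp: borel_measurable_nn_integral_joint_density emeasure_lborel_Ioi_neq_0)

lemma nn_integral_sq_joint_density_bound:
  fixes x :: "'n::finite \<Rightarrow> real^'p::finite" and y :: "real^'n"
  assumes "2 \<le> CARD('n)" and "0 < s" "s < 1" "0 < \<gamma>" "0 < \<tau>" "0 < a" "0 < b"
    and "x i0 $ k \<noteq> 0"
  obtains K where "\<And>v. 0 < v \<Longrightarrow> (\<integral>\<^sup>+\<beta>. ennreal (\<bar>\<beta> $ k\<bar>\<^sup>2) * joint_density s \<gamma> \<tau> a b x y \<beta> v \<partial>lborel)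
      \<le> ennreal (invgamma_density a b v * (1 / sqrt v) ^ (CARD('n) - 2)) * ennreal K"
proof
  define C where "C = 2 * \<tau> / (pi * sqrt (2 * pi))"
  define F where "F = (1 - s) / sqrt (2 * pi) + s * \<gamma> * pi / sqrt (2 * pi)"
  define K where "K = C * F ^ (CARD('n) - 1) / \<bar>x i0 $ k\<bar>"
  have C: "0 \<le> C" and F: "0 \<le> F"
    using assms(2-5) by (simp_all add: C_def F_def)
  then have K: "0 \<le> K"
    by (simp add: K_def)
  fix v :: real
  assume v: "0 < v"
  let ?m = "CARD('n) - 2"
  have "(\<integral>\<^sup>+\<beta>. ennreal (\<bar>\<beta> $ k\<bar>\<^sup>2) * joint_density s \<gamma> \<tau> a b x y \<beta> v \<partial>lborel)
      = ennreal (invgamma_density a b v) * (\<integral>\<^sup>+\<beta>. ennreal (\<bar>\<beta> $ k\<bar>\<^sup>2)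
        * (\<Prod>j\<in>UNIV. scale_density (sqrt v) (horseshoe \<tau>) (\<beta> $ j))
        * (\<Prod>i\<in>UNIV. scale_density (sqrt v) (f_EH s \<gamma>) (y $ i - x i \<bullet> \<beta>)) \<partial>lborel)"
    unfolding joint_density_eq_scale_density by (subst nn_integral_cmult[symmetric]) (simp_all add: ac_simps)
  also have "\<dots> \<le> ennreal (invgamma_density a b v) * ennreal (K * (1 / sqrt v) ^ ?m)"
    unfolding K_def using assms v C F sq_mult_horseshoe_le[OF assms(5)] f_EH_le[OF assms(2-4)]
    by (intro mult_left_mono nn_integral_sq_prior_times_likelihood_le)
       (simp_all add: C_def F_def nn_integral_horseshoe nn_integral_f_EH)
  also have "\<dots> = ennreal (invgamma_density a b v * (1 / sqrt v) ^ ?m) * ennreal K"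
    using invgamma_density_pos[OF assms(6,7) v] v K by (simp add: ennreal_mult ac_simps)
  finally show "(\<integral>\<^sup>+\<beta>. ennreal (\<bar>\<beta> $ k\<bar>\<^sup>2) * joint_density s \<gamma> \<tau> a b x y \<beta> v \<partial>lborel) \<le> \<dots>" .
qed

lemma nn_integral_sq_joint_density_less_top:
  fixes x :: "'n::finite \<Rightarrow> real^'p::finite" and y :: "real^'n"
  assumes "2 \<le> CARD('n)" and "0 < s" "s < 1" "0 < \<gamma>" "0 < \<tau>" "0 < a" "0 < b"
    and "x i0 $ k \<noteq> 0"
  shows "(\<integral>\<^sup>+v\<in>{0<..}. (\<integral>\<^sup>+\<beta>. ennreal (\<bar>\<beta> $ k\<bar>\<^sup>2) * joint_density s \<gamma> \<tau> a b x y \<beta> v \<partial>lborel) \<partial>lborel) < \<infinity>"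
proof -
  let ?g = "\<lambda>v. ennreal (invgamma_density a b v * (1 / sqrt v) ^ (CARD('n) - 2))"
  obtain K where K: "\<And>v. 0 < v \<Longrightarrow> (\<integral>\<^sup>+\<beta>. ennreal (\<bar>\<beta> $ k\<bar>\<^sup>2) * joint_density s \<gamma> \<tau> a b x y \<beta> v \<partial>lborel)
      \<le> ?g v * ennreal K"
    using nn_integral_sq_joint_density_bound[where x = x, OF assms] by blast
  have "(\<integral>\<^sup>+v\<in>{0<..}. (\<integral>\<^sup>+\<beta>. ennreal (\<bar>\<beta> $ k\<bar>\<^sup>2) * joint_density s \<gamma> \<tau> a b x y \<beta> v \<partial>lborel) \<partial>lborel)
      \<le> (\<integral>\<^sup>+v. ?g v * indicator {0<..} v * ennreal K \<partial>lborel)"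
    using K by (intro nn_integral_mono) (auto simp: ac_simps split: split_indicator)
  also have "\<dots> = (\<integral>\<^sup>+v\<in>{0<..}. ?g v \<partial>lborel) * ennreal K"
    by (rule nn_integral_multc) measurable
  also have "\<dots> < \<infinity>"
    using nn_integral_invgamma_density_mult_power_less_top[OF assms(6,7)] by (simp add: ennreal_mult_less_top)
  finally show ?thesis .
qed

theorem corollary2p1:
  fixes x :: "'n::finite \<Rightarrow> real^'p::finite" and y :: "real^'n" and k :: 'p
    and s \<gamma> \<tau> a b :: real
  assumes "CARD('n) \<ge> 2"
    and "0 < s" and "s < 1" and "0 < \<gamma>" and "0 < \<tau>" and "0 < a" and "0 < b"
    and "\<exists>i. x i $ k \<noteq> 0"
  shows "posterior_expectation s \<gamma> \<tau> a b x y (\<lambda>\<beta> v. \<bar>\<beta> $ k\<bar>\<^sup>2) < \<infinity>"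
proof -
  obtain i0 where "x i0 $ k \<noteq> 0"
    using assms(8) by blast
  with assms(1-7) have "(\<integral>\<^sup>+v\<in>{0<..}. (\<integral>\<^sup>+\<beta>. ennreal (\<bar>\<beta> $ k\<bar>\<^sup>2) * joint_density s \<gamma> \<tau> a b x y \<beta> v \<partial>lborel) \<partial>lborel) < \<infinity>"
    by (rule nn_integral_sq_joint_density_less_top[where x = x])
  moreover have "0 < (\<integral>\<^sup>+v\<in>{0<..}. (\<integral>\<^sup>+\<beta>. joint_density s \<gamma> \<tau> a b x y \<beta> v \<partial>lborel) \<partial>lborel)"
    using assms by (intro nn_integral_joint_density_pos)
  ultimately show ?thesis
    unfolding posterior_expectation_def by (auto simp: ennreal_divide_eq_top_iff less_top[symmetric])
qed

end
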